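(* Let $S$ be an intra-regular $\Gamma$-AG$^{**}$-groupoid. Then every right $\Gamma$-ideal, every left $\Gamma$-ideal, and every two-sided $\Gamma$-ideal of $S$ is $\Gamma$-semiprime.
   Context: Let $S$ and $\Gamma$ be nonempty sets with a map $S\times\Gamma\times S\to S$, $(x,\gamma,y)\mapsto x\gamma y$. $S$ is a $\Gamma$-AG-groupoid if $(x\gamma y)\delta z=(z\gamma y)\delta x$ for all $x,y,z\in S$, $\gamma,\delta\in\Gamma$; it is a $\Gamma$-AG$^{**}$-groupoid if moreover $a\alpha(b\beta c)=b\alpha(a\beta c)$ for all $a,b,c\in S$, $\alpha,\beta\in\Gamma$. For subsets $A,B\subseteq S$, $A\Gamma B=\{a\gamma b: a\in A,\gamma\in\Gamma,b\in B\}$. $S$ is intra-regular if for every $a\in S$ there exist $x,y\in S$ and $\beta,\gamma,\delta\in\Gamma$ with $a=(x\beta(a\delta a))\gamma y$. A nonempty subset $A$ is a left (right) $\Gamma$-ideal if $S\Gamma A\subseteq A$ ($A\Gamma S\subseteq A$), two-sided if both. A subset $P\subseteq S$ is $\Gamma$-semiprime if for every $a\in S$, $a\Gamma a\subseteq P$ implies $a\in P$. *)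

theory Defs
  imports Main
begin

definition gamma_closed :: "'a set \<Rightarrow> 'g set \<Rightarrow> ('a \<Rightarrow> 'g \<Rightarrow> 'a \<Rightarrow> 'a) \<Rightarrow> bool" where
  "gamma_closed S G m \<longleftrightarrow> (\<forall>x\<in>S. \<forall>g\<in>G. \<forall>y\<in>S. m x g y \<in> S)"

definition gamma_AG_groupoid :: "'a set \<Rightarrow> 'g set \<Rightarrow> ('a \<Rightarrow> 'g \<Rightarrow> 'a \<Rightarrow> 'a) \<Rightarrow> bool" where
  "gamma_AG_groupoid S G m \<longleftrightarrow> S \<noteq> {} \<and> G \<noteq> {} \<and> gamma_closed S G m \<and>
     (\<forall>x\<in>S. \<forall>y\<in>S. \<forall>z\<in>S. \<forall>g\<in>G. \<forall>d\<in>G. m (m x g y) d z = m (m z g y) d x)"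

definition gamma_AG_ss_groupoid :: "'a set \<Rightarrow> 'g set \<Rightarrow> ('a \<Rightarrow> 'g \<Rightarrow> 'a \<Rightarrow> 'a) \<Rightarrow> bool" where
  "gamma_AG_ss_groupoid S G m \<longleftrightarrow> gamma_AG_groupoid S G m \<and>
     (\<forall>a\<in>S. \<forall>b\<in>S. \<forall>c\<in>S. \<forall>al\<in>G. \<forall>be\<in>G. m a al (m b be c) = m b al (m a be c))"

definition gprod :: "('a \<Rightarrow> 'g \<Rightarrow> 'a \<Rightarrow> 'a) \<Rightarrow> 'a set \<Rightarrow> 'g set \<Rightarrow> 'a set \<Rightarrow> 'a set" where
  "gprod m A G B = {m a g b | a g b. a \<in> A \<and> g \<in> G \<and> b \<in> B}"

definition intra_regular :: "'a set \<Rightarrow> 'g set \<Rightarrow> ('a \<Rightarrow> 'g \<Rightarrow> 'a \<Rightarrow> 'a) \<Rightarrow> bool" where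
  "intra_regular S G m \<longleftrightarrow> (\<forall>a\<in>S. \<exists>x\<in>S. \<exists>y\<in>S. \<exists>be\<in>G. \<exists>ga\<in>G. \<exists>de\<in>G.
      a = m (m x be (m a de a)) ga y)"

definition left_gamma_ideal :: "'a set \<Rightarrow> 'g set \<Rightarrow> ('a \<Rightarrow> 'g \<Rightarrow> 'a \<Rightarrow> 'a) \<Rightarrow> 'a set \<Rightarrow> bool" where
  "left_gamma_ideal S G m A \<longleftrightarrow> A \<noteq> {} \<and> A \<subseteq> S \<and> gprod m S G A \<subseteq> A"

definition right_gamma_ideal :: "'a set \<Rightarrow> 'g set \<Rightarrow> ('a \<Rightarrow> 'g \<Rightarrow> 'a \<Rightarrow> 'a) \<Rightarrow> 'a set \<Rightarrow> bool" where
  "right_gamma_ideal S G m A \<longleftrightarrow> A \<noteq> {} \<and> A \<subseteq> S \<and> gprod m A G S \<subseteq> A"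

definition two_sided_gamma_ideal :: "'a set \<Rightarrow> 'g set \<Rightarrow> ('a \<Rightarrow> 'g \<Rightarrow> 'a \<Rightarrow> 'a) \<Rightarrow> 'a set \<Rightarrow> bool" where
  "two_sided_gamma_ideal S G m A \<longleftrightarrow> left_gamma_ideal S G m A \<and> right_gamma_ideal S G m A"

definition gamma_semiprime :: "'a set \<Rightarrow> 'g set \<Rightarrow> ('a \<Rightarrow> 'g \<Rightarrow> 'a \<Rightarrow> 'a) \<Rightarrow> 'a set \<Rightarrow> bool" where
  "gamma_semiprime S G m P \<longleftrightarrow> P \<subseteq> S \<and> (\<forall>a\<in>S. gprod m {a} G {a} \<subseteq> P \<longrightarrow> a \<in> P)"

end

theory Submission
  imports Defs
begin

text \<open>
  In an intra-regular Gamma-AG**-groupoid every element a factors as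
  a = (x be (a de a)) ga y.  Using the left invertive law (x g y) d z = (z g y) d x and
  the law a al (b be c) = b al (a be c), this factorisation lets us move a to the other
  side of any product s g a or a g s.  Consequently every left Gamma-ideal is a right
  Gamma-ideal and vice versa, so all three kinds of ideals coincide with two-sided
  Gamma-ideals.  A two-sided Gamma-ideal A is Gamma-semiprime directly: if a de a lies in A,
  then so does x be (a de a) (left ideal) and hence (x be (a de a)) ga y = a (right ideal).
\<close>


lemma gamma_AG_closed:
  assumes "gamma_AG_groupoid S G m" "x \<in> S" "g \<in> G" "y \<in> S"
  shows "m x g y \<in> S"
  using assms unfolding gamma_AG_groupoid_def gamma_closed_def by blast

lemma gamma_AG_left_invertive:
  assumes "gamma_AG_groupoid S G m" "x \<in> S" "y \<in> S" "z \<in> S" "g \<in> G" "d \<in> G"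
  shows "m (m x g y) d z = m (m z g y) d x"
  using assms unfolding gamma_AG_groupoid_def by blast

lemma gamma_AG_ss_exchange:
  assumes "gamma_AG_ss_groupoid S G m" "a \<in> S" "b \<in> S" "c \<in> S" "al \<in> G" "be \<in> G"
  shows "m a al (m b be c) = m b al (m a be c)"
  using assms unfolding gamma_AG_ss_groupoid_def by blast

lemma gamma_AG_ss_groupoid_AG:
  "gamma_AG_ss_groupoid S G m \<Longrightarrow> gamma_AG_groupoid S G m"
  unfolding gamma_AG_ss_groupoid_def by blast

lemma intra_regularE:
  assumes "intra_regular S G m" "a \<in> S"
  obtains x y be ga de where "x \<in> S" "y \<in> S" "be \<in> G" "ga \<in> G" "de \<in> G"
    and "a = m (m x be (m a de a)) ga y"
  using assms unfolding intra_regular_def by blast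

lemma left_gamma_idealD:
  assumes "left_gamma_ideal S G m A"
  shows "A \<noteq> {}" "A \<subseteq> S" "\<And>s g a. s \<in> S \<Longrightarrow> g \<in> G \<Longrightarrow> a \<in> A \<Longrightarrow> m s g a \<in> A"
  using assms unfolding left_gamma_ideal_def gprod_def by blast+

lemma right_gamma_idealD:
  assumes "right_gamma_ideal S G m A"
  shows "A \<noteq> {}" "A \<subseteq> S" "\<And>a g s. a \<in> A \<Longrightarrow> g \<in> G \<Longrightarrow> s \<in> S \<Longrightarrow> m a g s \<in> A"
  using assms unfolding right_gamma_ideal_def gprod_def by blast+

lemma left_gamma_idealI:
  assumes "A \<noteq> {}" "A \<subseteq> S" "\<And>s g a. s \<in> S \<Longrightarrow> g \<in> G \<Longrightarrow> a \<in> A \<Longrightarrow> m s g a \<in> A"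
  shows "left_gamma_ideal S G m A"
  using assms unfolding left_gamma_ideal_def gprod_def by blast

lemma right_gamma_idealI:
  assumes "A \<noteq> {}" "A \<subseteq> S" "\<And>a g s. a \<in> A \<Longrightarrow> g \<in> G \<Longrightarrow> s \<in> S \<Longrightarrow> m a g s \<in> A"
  shows "right_gamma_ideal S G m A"
  using assms unfolding right_gamma_ideal_def gprod_def by blast


lemma two_sided_gamma_ideal_semiprime:
  assumes ir: "intra_regular S G m"
    and L: "left_gamma_ideal S G m A" and R: "right_gamma_ideal S G m A"
  shows "gamma_semiprime S G m A"
  unfolding gamma_semiprime_def
proof (intro conjI ballI impI)
  show "A \<subseteq> S" using left_gamma_idealD(2)[OF L] .
  fix a assume aS: "a \<in> S" and sq: "gprod m {a} G {a} \<subseteq> A"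
  obtain x y be ga de where xy: "x \<in> S" "y \<in> S" "be \<in> G" "ga \<in> G" "de \<in> G"
    and a: "a = m (m x be (m a de a)) ga y"
    using intra_regularE[OF ir aS] .
  have "m a de a \<in> A" using sq xy unfolding gprod_def by blast
  then have "m x be (m a de a) \<in> A" using left_gamma_idealD(3)[OF L] xy by blast
  then have "m (m x be (m a de a)) ga y \<in> A" using right_gamma_idealD(3)[OF R] xy by blast
  then show "a \<in> A" using a by simp
qed


text \<open>For s in a left ideal A:
  s g t = ((x be (s de s)) ga y) g t = (t ga y) g (x be (s de s)) = x g ((t ga y) be (s de s)),
  and the last term lies in A because s de s does.\<close>
lemma left_gamma_ideal_is_right:
  assumes ss: "gamma_AG_ss_groupoid S G m" and ir: "intra_regular S G m"
    and L: "left_gamma_ideal S G m A"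
  shows "right_gamma_ideal S G m A"
proof (rule right_gamma_idealI)
  have AG: "gamma_AG_groupoid S G m" using gamma_AG_ss_groupoid_AG[OF ss] .
  note cl = gamma_AG_closed[OF AG] and L_mult = left_gamma_idealD(3)[OF L]
  show "A \<noteq> {}" "A \<subseteq> S" using left_gamma_idealD[OF L] by blast+
  fix s g t assume s: "s \<in> A" and g: "g \<in> G" and t: "t \<in> S"
  have sS: "s \<in> S" using s left_gamma_idealD(2)[OF L] by blast
  obtain x y be ga de where xy: "x \<in> S" "y \<in> S" "be \<in> G" "ga \<in> G" "de \<in> G"
    and s_eq: "s = m (m x be (m s de s)) ga y"
    using intra_regularE[OF ir sS] .
  have ss_S: "m s de s \<in> S" and u_S: "m x be (m s de s) \<in> S" and ty_S: "m t ga y \<in> S"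
    using cl xy sS t by blast+
  have "m s g t = m (m (m x be (m s de s)) ga y) g t"
    using s_eq by simp
  also have "\<dots> = m (m t ga y) g (m x be (m s de s))"
    using gamma_AG_left_invertive[OF AG u_S xy(2) t xy(4) g] .
  also have "\<dots> = m x g (m (m t ga y) be (m s de s))"
    using gamma_AG_ss_exchange[OF ss ty_S xy(1) ss_S g xy(3)] .
  also have "\<dots> \<in> A"
    using L_mult[OF xy(1) g L_mult[OF ty_S xy(3) L_mult[OF sS xy(5) s]]] .
  finally show "m s g t \<in> A" .
qed

text \<open>For s in a right ideal A:
  t g s = t g ((x be (s de s)) ga y) = (x be (s de s)) g (t ga y) = (s be (x de s)) g (t ga y),
  which lies in A since its leftmost factor s does.\<close>
lemma right_gamma_ideal_is_left:
  assumes ss: "gamma_AG_ss_groupoid S G m" and ir: "intra_regular S G m"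
    and R: "right_gamma_ideal S G m A"
  shows "left_gamma_ideal S G m A"
proof (rule left_gamma_idealI)
  have AG: "gamma_AG_groupoid S G m" using gamma_AG_ss_groupoid_AG[OF ss] .
  note cl = gamma_AG_closed[OF AG] and R_mult = right_gamma_idealD(3)[OF R]
  show "A \<noteq> {}" "A \<subseteq> S" using right_gamma_idealD[OF R] by blast+
  fix t g s assume t: "t \<in> S" and g: "g \<in> G" and s: "s \<in> A"
  have sS: "s \<in> S" using s right_gamma_idealD(2)[OF R] by blast
  obtain x y be ga de where xy: "x \<in> S" "y \<in> S" "be \<in> G" "ga \<in> G" "de \<in> G"
    and s_eq: "s = m (m x be (m s de s)) ga y"
    using intra_regularE[OF ir sS] .
  have u_S: "m x be (m s de s) \<in> S" and ty_S: "m t ga y \<in> S" and xs_S: "m x de s \<in> S"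
    using cl xy sS t by blast+
  have "m t g s = m t g (m (m x be (m s de s)) ga y)"
    using s_eq by simp
  also have "\<dots> = m (m x be (m s de s)) g (m t ga y)"
    using gamma_AG_ss_exchange[OF ss t u_S xy(2) g xy(4)] .
  also have "\<dots> = m (m s be (m x de s)) g (m t ga y)"
    using gamma_AG_ss_exchange[OF ss xy(1) sS sS xy(3) xy(5)] by simp
  also have "\<dots> \<in> A"
    using R_mult[OF R_mult[OF s xy(3) xs_S] g ty_S] .
  finally show "m t g s \<in> A" .
qed


theorem mainTheorem14:
  fixes S :: "'a set" and G :: "'g set" and m :: "'a \<Rightarrow> 'g \<Rightarrow> 'a \<Rightarrow> 'a"
  assumes "gamma_AG_ss_groupoid S G m"
    and "intra_regular S G m"
  shows "(\<forall>A. right_gamma_ideal S G m A \<longrightarrow> gamma_semiprime S G m A) \<and>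
         (\<forall>A. left_gamma_ideal S G m A \<longrightarrow> gamma_semiprime S G m A) \<and>
         (\<forall>A. two_sided_gamma_ideal S G m A \<longrightarrow> gamma_semiprime S G m A)"
proof -
  have two_sided: "gamma_semiprime S G m A"
    if "left_gamma_ideal S G m A" "right_gamma_ideal S G m A" for A
    using two_sided_gamma_ideal_semiprime[OF assms(2) that] .
  show ?thesis
    using two_sided left_gamma_ideal_is_right[OF assms] right_gamma_ideal_is_left[OF assms]
    unfolding two_sided_gamma_ideal_def by blast
qed

end
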